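(* Let $\mathcal{H}$ be a complex Hilbert space. Then $w_{\Omega}(T) = \sqrt{2}\,w(T)$ for all $T\in\mathbb{B}(\mathcal{H})$.
   Context: $\mathbb{B}(\mathcal{H})$ is the algebra of bounded linear operators on $\mathcal{H}$, $\|\cdot\|$ the usual operator norm, and $w(T)=\sup\{|\langle Tx,x\rangle|:\|x\|=1\}$ the numerical radius. Dragomir's norm is $\Omega(T)=\sup\{\|\zeta T+\eta T^*\|:\ \zeta,\eta\in\mathbb{C},\ |\zeta|^2+|\eta|^2\le 1\}$. For $A\in\mathbb{B}(\mathcal{H})$, ${\rm Re}(A)=\frac{A+A^*}{2}$, and $w_\Omega(T)=\sup_{\theta\in\mathbb{R}}\Omega\big({\rm Re}(e^{i\theta}T)\big)$. *)

theory Defs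
  imports "HOL-Analysis.Analysis"
begin

text \<open>A complex Hilbert space: a real Hilbert space (real inner product space that is
complete) carrying a compatible complex scalar multiplication whose norm is absolutely
homogeneous for complex scalars.  The complex inner product is then determined by the
real one (see cinner below).\<close>

class complex_hilbert = real_inner + complete_space +
  fixes scaleC :: "complex \<Rightarrow> 'a \<Rightarrow> 'a"
  assumes scaleC_add_right: "scaleC a (x + y) = scaleC a x + scaleC a y"
    and scaleC_add_left: "scaleC (a + b) x = scaleC a x + scaleC b x"
    and scaleC_scaleC: "scaleC a (scaleC b x) = scaleC (a * b) x"
    and scaleC_one: "scaleC 1 x = x"
    and scaleC_of_real: "scaleC (complex_of_real r) x = scaleR r x"
    and norm_scaleC: "norm (scaleC a x) = cmod a * norm x"

text \<open>Complex inner product, linear in the first argument, conjugate linear in the second,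
with real part the real inner product.\<close>
definition cinner :: "'a::complex_hilbert \<Rightarrow> 'a \<Rightarrow> complex" where
  "cinner x y = complex_of_real (inner x y) + \<i> * complex_of_real (inner x (scaleC \<i> y))"

definition bounded_op :: "('a::complex_hilbert \<Rightarrow> 'a) \<Rightarrow> bool" where
  "bounded_op T \<longleftrightarrow>
     (\<forall>x y. T (x + y) = T x + T y) \<and>
     (\<forall>c x. T (scaleC c x) = scaleC c (T x)) \<and>
     (\<exists>K. \<forall>x. norm (T x) \<le> K * norm x)"

definition hadjoint :: "('a::complex_hilbert \<Rightarrow> 'a) \<Rightarrow> ('a \<Rightarrow> 'a)" where
  "hadjoint T = (SOME S. \<forall>x y. cinner (T x) y = cinner x (S y))"

text \<open>Operator norm is the library onorm.  Numerical radius (sup over the unit sphere;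
the insert 0 only fixes the convention sup of the empty set = 0 for the zero space,
all values being nonnegative).\<close>
definition numrad :: "('a::complex_hilbert \<Rightarrow> 'a) \<Rightarrow> real" where
  "numrad T = Sup (insert 0 ((\<lambda>x. cmod (cinner (T x) x)) ` {x. norm x = 1}))"

definition ReOp :: "('a::complex_hilbert \<Rightarrow> 'a) \<Rightarrow> ('a \<Rightarrow> 'a)" where
  "ReOp A = (\<lambda>x. scaleC (1/2) (A x + hadjoint A x))"

definition dragomir :: "('a::complex_hilbert \<Rightarrow> 'a) \<Rightarrow> real" where
  "dragomir T = (SUP p \<in> {(\<zeta>, \<eta>). (cmod \<zeta>)\<^sup>2 + (cmod \<eta>)\<^sup>2 \<le> 1}.
      onorm (\<lambda>x. scaleC (fst p) (T x) + scaleC (snd p) (hadjoint T x)))"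

definition w_Omega :: "('a::complex_hilbert \<Rightarrow> 'a) \<Rightarrow> real" where
  "w_Omega T = (SUP \<theta> \<in> (UNIV::real set).
      dragomir (ReOp (\<lambda>x. scaleC (exp (\<i> * complex_of_real \<theta>)) (T x))))"

end

theory Submission
  imports Defs
begin

(* For a self-adjoint R we have zeta R + eta R^* = (zeta + eta) R, and |zeta + eta| <= sqrt 2 on the
   unit ball of C^2, with equality at zeta = eta = 1/sqrt 2; hence Omega(R) = sqrt 2 ||R||.  Every
   Re(e^(i theta) T) is self-adjoint, so w_Omega(T) = sqrt 2 sup_theta ||Re(e^(i theta) T)||, and this
   supremum is w(T).  Indeed <Re(e^(i theta) T) x, x> = Re(e^(i theta) <T x, x>) has modulus at most
   |<T x, x>|, and polarization bounds the norm of a self-adjoint operator by the supremum of its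
   quadratic form; conversely theta = -arg <T x, x> makes <Re(e^(i theta) T) x, x> = |<T x, x>|.
   The adjoints exist by the Riesz representation theorem, which rests on the nearest-point property
   of closed convex sets in a Hilbert space. *)

section \<open>Complex scalars and the complex inner product\<close>

lemma scaleC_scaleR_commute: "scaleC c (r *\<^sub>R x) = r *\<^sub>R scaleC c (x::'a::complex_hilbert)"
  by (metis mult.commute scaleC_of_real scaleC_scaleC)

lemma scaleC_Re_Im: "scaleC c x = Re c *\<^sub>R x + Im c *\<^sub>R scaleC \<i> (x::'a::complex_hilbert)"
proof -
  have "c = complex_of_real (Re c) + complex_of_real (Im c) * \<i>"
    by (simp add: complex_eq_iff)
  then have "scaleC c x = scaleC (complex_of_real (Re c)) x + scaleC (complex_of_real (Im c)) (scaleC \<i> x)"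
    by (metis scaleC_add_left scaleC_scaleC)
  then show ?thesis
    by (simp add: scaleC_of_real)
qed

lemma scaleC_i_i: "scaleC \<i> (scaleC \<i> x) = - (x::'a::complex_hilbert)"
proof -
  have "scaleC \<i> (scaleC \<i> x) = scaleC (complex_of_real (-1)) x"
    by (simp add: scaleC_scaleC)
  then show ?thesis
    by (simp only: scaleC_of_real scaleR_minus1_left)
qed

lemma inner_scaleC_i_i: "inner (scaleC \<i> x) (scaleC \<i> y) = inner x (y::'a::complex_hilbert)"
  by (simp add: dot_norm norm_scaleC flip: scaleC_add_right)

lemma inner_scaleC_i_left: "inner (scaleC \<i> x) y = - inner x (scaleC \<i> (y::'a::complex_hilbert))"
  by (metis inner_scaleC_i_i inner_minus_left scaleC_i_i)

lemma Re_cinner [simp]: "Re (cinner x y) = inner x y"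
  by (simp add: cinner_def)

lemma Im_cinner [simp]: "Im (cinner x y) = inner x (scaleC \<i> y)"
  by (simp add: cinner_def)

lemma cinner_commute: "cinner y x = cnj (cinner x (y::'a::complex_hilbert))"
proof -
  have "inner y (scaleC \<i> x) = - inner x (scaleC \<i> y)"
    by (metis inner_commute inner_scaleC_i_left)
  then show ?thesis
    by (simp add: complex_eq_iff inner_commute[of y x])
qed

lemma cinner_add_left: "cinner (x + y) z = cinner x z + cinner y (z::'a::complex_hilbert)"
  by (simp add: complex_eq_iff inner_add_left)

lemma cinner_scaleR_left: "cinner (r *\<^sub>R x) y = of_real r * cinner x (y::'a::complex_hilbert)"
  by (simp add: complex_eq_iff)

lemma cinner_add_right: "cinner x (y + z) = cinner x y + cinner x (z::'a::complex_hilbert)"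
  by (simp add: complex_eq_iff inner_add_right scaleC_add_right)

lemma cinner_scaleR_right: "cinner x (r *\<^sub>R y) = of_real r * cinner x (y::'a::complex_hilbert)"
  by (simp add: complex_eq_iff scaleC_scaleR_commute)

lemma cinner_scaleC_left: "cinner (scaleC c x) y = c * cinner x (y::'a::complex_hilbert)"
  by (simp add: complex_eq_iff scaleC_Re_Im[of c x] inner_add_left inner_scaleC_i_left inner_scaleC_i_i scaleC_i_i)

lemma exp_neg_Arg_mult: "exp (\<i> * of_real (- Arg z)) * z = of_real (cmod z)"
proof (cases "z = 0")
  case False
  then have "exp (\<i> * of_real (- Arg z)) * z
      = of_real (cmod z) * (exp (- (\<i> * of_real (Arg z))) * exp (\<i> * of_real (Arg z)))"
    by (subst (2) Arg_eq) (simp_all add: algebra_simps)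
  then show ?thesis
    by (simp add: exp_minus)
qed simp

lemma norm_cinner_le: "cmod (cinner x y) \<le> norm x * norm (y::'a::complex_hilbert)"
proof -
  define e where "e = exp (\<i> * of_real (- Arg (cinner x y)))"
  have "cmod (cinner x y) = inner (scaleC e x) y"
    using exp_neg_Arg_mult[of "cinner x y"]
    by (simp add: cinner_scaleC_left e_def flip: Re_cinner)
  also have "\<dots> \<le> norm (scaleC e x) * norm y"
    by (rule norm_cauchy_schwarz)
  also have "\<dots> = norm x * norm y"
    by (simp add: norm_scaleC e_def norm_exp_i_times)
  finally show ?thesis .
qed

section \<open>Nearest points and the Riesz representation theorem\<close>

lemma parallelogram_law:
  fixes a b :: "'a::real_inner"
  shows "(norm (a - b))\<^sup>2 + (norm (a + b))\<^sup>2 = 2 * (norm a)\<^sup>2 + 2 * (norm b)\<^sup>2"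
  by (simp add: power2_norm_eq_inner inner_simps inner_commute)

lemma convex_norm_diff_sq_le:
  fixes u :: "'a::real_inner"
  assumes "convex S" "a \<in> S" "b \<in> S" and lower: "\<And>m. m \<in> S \<Longrightarrow> \<delta> \<le> (norm (u - m))\<^sup>2"
  shows "(norm (a - b))\<^sup>2 \<le> 2 * (norm (u - a))\<^sup>2 + 2 * (norm (u - b))\<^sup>2 - 4 * \<delta>"
proof -
  have "(1/2) *\<^sub>R (a + b) \<in> S"
    using assms(1-3) by (simp add: convex_def scaleR_add_right flip: scaleR_add_left)
  moreover have "(u - b) + (u - a) = 2 *\<^sub>R (u - (1/2) *\<^sub>R (a + b))"
    by (simp add: algebra_simps scaleR_2)
  ultimately have "4 * \<delta> \<le> (norm ((u - b) + (u - a)))\<^sup>2"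
    using lower by (simp add: power_mult_distrib)
  moreover have "(norm (a - b))\<^sup>2 + (norm ((u - b) + (u - a)))\<^sup>2 = 2 * (norm (u - b))\<^sup>2 + 2 * (norm (u - a))\<^sup>2"
    using parallelogram_law[of "u - b" "u - a"] by simp
  ultimately show ?thesis
    by linarith
qed

lemma convex_nearest_point_exists:
  fixes S :: "'a::{real_inner,complete_space} set"
  assumes "closed S" "convex S" "S \<noteq> {}"
  shows "\<exists>n\<in>S. \<forall>m\<in>S. norm (u - n) \<le> norm (u - m)"
proof -
  define \<delta> where "\<delta> = (INF m\<in>S. (norm (u - m))\<^sup>2)"
  have bdd: "bdd_below ((\<lambda>m. (norm (u - m))\<^sup>2) ` S)"
    by (rule bdd_belowI[of _ 0]) auto
  have lower: "\<delta> \<le> (norm (u - m))\<^sup>2" if "m \<in> S" for m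
    unfolding \<delta>_def using bdd that by (rule cINF_lower)
  have "\<exists>m\<in>S. (norm (u - m))\<^sup>2 < \<delta> + inverse (real (Suc k))" for k
  proof -
    have "\<delta> < \<delta> + inverse (real (Suc k))"
      by simp
    then show ?thesis
      using cINF_less_iff[OF \<open>S \<noteq> {}\<close> bdd] unfolding \<delta>_def by blast
  qed
  then obtain s where s: "\<And>k. s k \<in> S" "\<And>k. (norm (u - s k))\<^sup>2 < \<delta> + inverse (real (Suc k))"
    by metis
  have "Cauchy s"
  proof (rule CauchyI)
    fix e :: real
    assume "0 < e"
    then obtain M where M: "inverse (real (Suc M)) < e\<^sup>2 / 4"
      using reals_Archimedean by (metis zero_less_divide_iff zero_less_numeral zero_less_power)
    have "norm (s m - s n) < e" if "m \<ge> M" "n \<ge> M" for m n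
    proof -
      have "inverse (real (Suc m)) \<le> inverse (real (Suc M))" "inverse (real (Suc n)) \<le> inverse (real (Suc M))"
        using that by (auto simp: field_simps)
      then have "(norm (s m - s n))\<^sup>2 < e\<^sup>2"
        using convex_norm_diff_sq_le[OF \<open>convex S\<close> s(1) s(1) lower, of m n] s(2)[of m] s(2)[of n] M
        by linarith
      then show ?thesis
        using \<open>0 < e\<close> by (simp add: power_less_imp_less_base)
    qed
    then show "\<exists>M. \<forall>m\<ge>M. \<forall>n\<ge>M. norm (s m - s n) < e"
      by blast
  qed
  then obtain n where lim: "s \<longlonglongrightarrow> n"
    using Cauchy_convergent_iff convergent_def by blast
  have "n \<in> S"
    using closed_sequentially[OF \<open>closed S\<close> s(1) lim] .
  have "(\<lambda>k. (norm (u - s k))\<^sup>2) \<longlonglongrightarrow> (norm (u - n))\<^sup>2"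
    by (intro tendsto_intros lim)
  moreover have "(\<lambda>k. \<delta> + inverse (real (Suc k))) \<longlonglongrightarrow> \<delta> + 0"
    by (intro tendsto_intros LIMSEQ_inverse_real_of_nat)
  ultimately have "(norm (u - n))\<^sup>2 \<le> \<delta> + 0"
    by (rule LIMSEQ_le) (use s(2) in \<open>auto intro: less_imp_le\<close>)
  then have "norm (u - n) \<le> norm (u - m)" if "m \<in> S" for m
    using lower[OF that] by (simp add: power2_le_imp_le)
  with \<open>n \<in> S\<close> show ?thesis
    by blast
qed

lemma nearest_point_subspace_orthogonal:
  fixes u :: "'a::real_inner"
  assumes "subspace S" "n \<in> S" "m \<in> S" and nearest: "\<And>m. m \<in> S \<Longrightarrow> norm (u - n) \<le> norm (u - m)"
  shows "inner (u - n) m = 0"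
proof (cases "m = 0")
  case False
  define w where "w = u - n"
  define p where "p = inner w m"
  define M where "M = (norm m)\<^sup>2"
  have "M > 0"
    using False by (simp add: M_def)
  have "n + (p / M) *\<^sub>R m \<in> S"
    using assms(1-3) by (simp add: subspace_add subspace_scale)
  then have "(norm w)\<^sup>2 \<le> (norm (w - (p / M) *\<^sub>R m))\<^sup>2"
    using nearest by (simp add: w_def diff_diff_eq)
  also have "\<dots> = (norm w)\<^sup>2 - p\<^sup>2 / M"
    using \<open>M > 0\<close> unfolding M_def p_def power2_norm_eq_inner
    by (simp add: inner_diff_left inner_diff_right inner_commute[of m w] power2_eq_square field_simps)
  finally have "p\<^sup>2 / M \<le> 0"
    by simp
  then show ?thesis
    using \<open>M > 0\<close> by (simp add: w_def p_def divide_le_0_iff)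
qed simp

lemma riesz_representation:
  fixes f :: "'a::{real_inner,complete_space} \<Rightarrow> real"
  assumes "bounded_linear f"
  shows "\<exists>z. \<forall>x. f x = inner x z"
proof (cases "\<forall>x. f x = 0")
  case True
  then show ?thesis
    by (intro exI[of _ 0]) simp
next
  case False
  interpret f: bounded_linear f by fact
  define N where "N = {x. f x = 0}"
  obtain u0 where "f u0 \<noteq> 0"
    using False by blast
  define u where "u = (1 / f u0) *\<^sub>R u0"
  have "f u = 1"
    using \<open>f u0 \<noteq> 0\<close> by (simp add: u_def f.scaleR)
  have "subspace N"
    by (auto simp: N_def subspace_def f.add f.scaleR)
  moreover have "closed N"
    unfolding N_def by (intro closed_Collect_eq continuous_on_const linear_continuous_on assms)
  ultimately obtain n where "n \<in> N" and nearest: "\<And>m. m \<in> N \<Longrightarrow> norm (u - n) \<le> norm (u - m)"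
    using convex_nearest_point_exists[of N u] subspace_imp_convex by (metis empty_iff subspace_0)
  define v where "v = u - n"
  have "f v = 1"
    using \<open>f u = 1\<close> \<open>n \<in> N\<close> by (simp add: v_def f.diff N_def)
  then have "(norm v)\<^sup>2 \<noteq> 0"
    using f.zero by auto
  have "f x = inner x ((1 / (norm v)\<^sup>2) *\<^sub>R v)" for x
  proof -
    have "x - f x *\<^sub>R v \<in> N"
      using \<open>f v = 1\<close> by (simp add: N_def f.diff f.scaleR)
    then have "inner v (x - f x *\<^sub>R v) = 0"
      using nearest_point_subspace_orthogonal[OF \<open>subspace N\<close> \<open>n \<in> N\<close> _ nearest] by (simp add: v_def)
    then show ?thesis
      using \<open>(norm v)\<^sup>2 \<noteq> 0\<close> by (simp add: inner_diff_right inner_commute power2_norm_eq_inner field_simps)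
  qed
  then show ?thesis
    by blast
qed

section \<open>Symmetric operators\<close>

lemma symmetric_imp_linear:
  fixes R :: "'a::real_inner \<Rightarrow> 'a"
  assumes sym: "\<And>x y. inner (R x) y = inner x (R y)"
  shows "linear R"
proof (rule linearI)
  show "R (x + y) = R x + R y" for x y
    by (rule vector_eq_rdot[THEN iffD1]) (simp add: sym inner_add_left inner_add_right)
  show "R (r *\<^sub>R x) = r *\<^sub>R R x" for r x
    by (rule vector_eq_rdot[THEN iffD1]) (simp add: sym)
qed

lemma symmetric_polarization:
  fixes R :: "'a::real_inner \<Rightarrow> 'a"
  assumes sym: "\<And>x y. inner (R x) y = inner x (R y)"
  shows "4 * inner (R a) b = inner (R (a + b)) (a + b) - inner (R (a - b)) (a - b)"
proof -
  have "inner (R b) a = inner (R a) b" "inner a (R b) = inner b (R a)"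
    by (metis sym inner_commute)+
  then show ?thesis
    using symmetric_imp_linear[OF sym] by (simp add: linear_add linear_diff inner_simps)
qed

lemma symmetric_operator_norm_le:
  fixes R :: "'a::real_inner \<Rightarrow> 'a"
  assumes sym: "\<And>x y. inner (R x) y = inner x (R y)"
    and form_bound: "\<And>z. \<bar>inner (R z) z\<bar> \<le> W * (norm z)\<^sup>2"
  shows "norm (R x) \<le> W * norm x"
proof (cases "R x = 0")
  case True
  have "0 \<le> W * (norm x)\<^sup>2"
    using form_bound[of x] by linarith
  then show ?thesis
    using True by (cases "x = 0") (simp_all add: zero_le_mult_iff)
next
  case False
  define y where "y = (norm x / norm (R x)) *\<^sub>R R x"
  have "norm y = norm x"
    using False by (simp add: y_def)
  have "inner (R x) y = norm x * norm (R x)"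
    using False by (simp add: y_def power2_norm_eq_inner[symmetric] power2_eq_square)
  have "inner (R (x + y)) (x + y) \<le> W * (norm (x + y))\<^sup>2"
    "- inner (R (x - y)) (x - y) \<le> W * (norm (x - y))\<^sup>2"
    using form_bound[of "x + y"] form_bound[of "x - y"] by linarith+
  then have "4 * inner (R x) y \<le> W * (norm (x - y))\<^sup>2 + W * (norm (x + y))\<^sup>2"
    using symmetric_polarization[OF sym, of x y] by linarith
  also have "\<dots> = W * (2 * (norm x)\<^sup>2 + 2 * (norm y)\<^sup>2)"
    by (metis distrib_left parallelogram_law)
  finally have "4 * inner (R x) y \<le> W * (2 * (norm x)\<^sup>2 + 2 * (norm y)\<^sup>2)" .
  then have "norm x * norm (R x) \<le> norm x * (W * norm x)"
    using \<open>norm y = norm x\<close> \<open>inner (R x) y = norm x * norm (R x)\<close> by (simp add: power2_eq_square algebra_simps)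
  moreover have "norm x > 0"
    using False symmetric_imp_linear[OF sym] by (auto simp: linear_0)
  ultimately show ?thesis
    by simp
qed

section \<open>Adjoints and real parts\<close>

lemma bounded_op_add: "bounded_op T \<Longrightarrow> T (x + y) = T x + T y"
  by (simp add: bounded_op_def)

lemma bounded_op_scaleC: "bounded_op T \<Longrightarrow> T (scaleC c x) = scaleC c (T x)"
  by (simp add: bounded_op_def)

lemma bounded_op_scaleR: "bounded_op T \<Longrightarrow> T (r *\<^sub>R x) = r *\<^sub>R T x"
  by (metis bounded_op_scaleC scaleC_of_real)

lemma bounded_op_imp_bounded_linear:
  assumes "bounded_op T"
  shows "bounded_linear T"
proof -
  obtain K where "\<And>x. norm (T x) \<le> K * norm x"
    using assms by (auto simp: bounded_op_def)
  then show ?thesis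
    using assms by (intro bounded_linear_intro[where K = K]) (auto simp: bounded_op_add bounded_op_scaleR mult.commute)
qed

lemma bounded_op_scaleC_left:
  assumes "bounded_op T"
  shows "bounded_op (\<lambda>x. scaleC c (T x))"
proof -
  obtain K where "\<And>x. norm (T x) \<le> K * norm x"
    using assms by (auto simp: bounded_op_def)
  then have bound: "norm (scaleC c (T x)) \<le> (cmod c * K) * norm x" for x
    by (simp add: norm_scaleC mult.assoc mult_left_mono)
  show ?thesis
    unfolding bounded_op_def
  proof (intro conjI allI exI)
    show "scaleC c (T (x + y)) = scaleC c (T x) + scaleC c (T y)" for x y
      by (simp add: bounded_op_add[OF assms] scaleC_add_right)
    show "scaleC c (T (scaleC d x)) = scaleC d (scaleC c (T x))" for d x
      by (simp add: bounded_op_scaleC[OF assms] scaleC_scaleC mult.commute)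
  qed (rule bound)
qed

lemma hadjoint_eqI:
  assumes "\<And>x y. cinner (A x) y = cinner x (S y)"
  shows "hadjoint A = S"
proof
  fix y
  have "\<forall>x y. cinner (A x) y = cinner x (hadjoint A y)"
    unfolding hadjoint_def by (rule someI[of _ S]) (simp add: assms)
  then have "inner x (hadjoint A y) = inner x (S y)" for x
    by (metis Re_cinner assms)
  then show "hadjoint A y = S y"
    using vector_eq_ldot by blast
qed

lemma hadjoint_exists:
  assumes A: "bounded_op A"
  shows "\<exists>S. \<forall>x y. cinner (A x) y = cinner x (S y)"
proof -
  have "\<exists>z. \<forall>x. inner (A x) y = inner x z" for y
    by (rule riesz_representation)
      (rule bounded_linear_compose[OF bounded_linear_inner_left bounded_op_imp_bounded_linear[OF A]])
  then obtain S where S: "\<And>x y. inner (A x) y = inner x (S y)"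
    by metis
  have "cinner (A x) y = cinner x (S y)" for x y
  proof -
    have "inner (A x) (scaleC \<i> y) = - inner (A (scaleC \<i> x)) y"
      by (simp add: bounded_op_scaleC[OF A] inner_scaleC_i_left)
    also have "\<dots> = inner x (scaleC \<i> (S y))"
      by (simp add: S inner_scaleC_i_left)
    finally show ?thesis
      by (simp add: complex_eq_iff S)
  qed
  then show ?thesis
    by blast
qed

lemma cinner_hadjoint: "bounded_op A \<Longrightarrow> cinner (A x) y = cinner x (hadjoint A y)"
  using hadjoint_eqI hadjoint_exists by metis

lemma ReOp_apply: "ReOp A x = (1/2) *\<^sub>R (A x + hadjoint A x)"
  unfolding ReOp_def using scaleC_of_real[of "1/2"] by simp

lemma cinner_ReOp:
  assumes A: "bounded_op A"
  shows "cinner (ReOp A x) y = cinner x (ReOp A y)"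
proof -
  have "cinner (hadjoint A x) y = cinner x (A y)"
    by (metis A cinner_commute cinner_hadjoint)
  then show ?thesis
    by (simp add: ReOp_apply cinner_add_left cinner_add_right cinner_scaleR_left cinner_scaleR_right
        cinner_hadjoint[OF A] algebra_simps)
qed

lemma hadjoint_ReOp: "bounded_op A \<Longrightarrow> hadjoint (ReOp A) = ReOp A"
  by (rule hadjoint_eqI) (rule cinner_ReOp)

lemma inner_ReOp: "bounded_op A \<Longrightarrow> inner (ReOp A x) y = inner x (ReOp A y)"
  by (metis Re_cinner cinner_ReOp)

lemma inner_ReOp_self:
  assumes "bounded_op A"
  shows "inner (ReOp A x) x = Re (cinner (A x) x)"
proof -
  have "inner (hadjoint A x) x = inner (A x) x"
    by (metis assms Re_cinner cinner_hadjoint inner_commute)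
  then show ?thesis
    by (simp add: ReOp_apply inner_add_left)
qed

section \<open>Numerical radius and Dragomir's norm\<close>

lemma bdd_above_numerical_range:
  assumes "bounded_op T"
  shows "bdd_above ((\<lambda>x. cmod (cinner (T x) x)) ` {x. norm x = 1})"
proof -
  obtain K where K: "\<And>x. norm (T x) \<le> K * norm x"
    using assms by (auto simp: bounded_op_def)
  have "cmod (cinner (T x) x) \<le> K" if "norm x = 1" for x
    using norm_cinner_le[of "T x" x] K[of x] that by simp
  then show ?thesis
    by (intro bdd_aboveI2[where M = K]) simp
qed

lemma numrad_upper: "bounded_op T \<Longrightarrow> norm x = 1 \<Longrightarrow> cmod (cinner (T x) x) \<le> numrad T"
  unfolding numrad_def by (rule cSup_upper) (auto simp: bdd_above_numerical_range)

lemma numrad_nonneg: "bounded_op T \<Longrightarrow> 0 \<le> numrad T"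
  unfolding numrad_def by (rule cSup_upper) (auto simp: bdd_above_numerical_range)

lemma numrad_least:
  "0 \<le> B \<Longrightarrow> (\<And>x. norm x = 1 \<Longrightarrow> cmod (cinner (T x) x) \<le> B) \<Longrightarrow> numrad T \<le> B"
  unfolding numrad_def by (rule cSup_least) auto

lemma norm_cinner_le_numrad:
  assumes T: "bounded_op T"
  shows "cmod (cinner (T z) z) \<le> numrad T * (norm z)\<^sup>2"
proof (cases "z = 0")
  case True
  then show ?thesis
    using norm_cinner_le[of "T z" z] by simp
next
  case False
  define u where "u = (1 / norm z) *\<^sub>R z"
  have "cinner (T z) z = of_real ((norm z)\<^sup>2) * cinner (T u) u"
    using False
    by (simp add: u_def bounded_op_scaleR[OF T] cinner_scaleR_left cinner_scaleR_right power2_eq_square)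
  moreover have "cmod (cinner (T u) u) \<le> numrad T"
    using False by (intro numrad_upper[OF T]) (simp add: u_def)
  ultimately show ?thesis
    using mult_left_mono[of "cmod (cinner (T u) u)" "numrad T" "(norm z)\<^sup>2"]
    by (simp add: norm_mult norm_power mult.commute)
qed

lemma numrad_scaleC_unimodular:
  assumes "cmod c = 1"
  shows "numrad (\<lambda>x. scaleC c (T x)) = numrad T"
  unfolding numrad_def using assms by (simp add: cinner_scaleC_left norm_mult)

lemma norm_ReOp_le_numrad:
  assumes A: "bounded_op A"
  shows "norm (ReOp A x) \<le> numrad A * norm x"
proof (rule symmetric_operator_norm_le)
  show "inner (ReOp A x) y = inner x (ReOp A y)" for x y
    by (rule inner_ReOp[OF A])
  show "\<bar>inner (ReOp A z) z\<bar> \<le> numrad A * (norm z)\<^sup>2" for z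
    using abs_Re_le_cmod[of "cinner (A z) z"] norm_cinner_le_numrad[OF A, of z]
    by (simp add: inner_ReOp_self[OF A])
qed

lemma bounded_linear_ReOp:
  assumes A: "bounded_op A"
  shows "bounded_linear (ReOp A)"
proof -
  have "linear (ReOp A)"
    by (rule symmetric_imp_linear) (rule inner_ReOp[OF A])
  then show ?thesis
    using norm_ReOp_le_numrad[OF A]
    by (intro bounded_linear_intro[where K = "numrad A"]) (auto simp: linear_add linear_scale mult.commute)
qed

lemma onorm_ReOp_le_numrad: "bounded_op A \<Longrightarrow> onorm (ReOp A) \<le> numrad A"
  by (rule onorm_bound) (simp_all add: numrad_nonneg norm_ReOp_le_numrad)

lemma Re_cinner_le_onorm_ReOp:
  assumes A: "bounded_op A" and "norm x = 1"
  shows "Re (cinner (A x) x) \<le> onorm (ReOp A)"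
proof -
  have "Re (cinner (A x) x) \<le> norm (ReOp A x) * norm x"
    unfolding inner_ReOp_self[OF A, symmetric] by (rule norm_cauchy_schwarz)
  also have "\<dots> \<le> onorm (ReOp A)"
    using onorm[OF bounded_linear_ReOp[OF A], of x] \<open>norm x = 1\<close> by simp
  finally show ?thesis .
qed

lemma cSUP_mult_left:
  fixes f :: "'a \<Rightarrow> real"
  assumes "0 \<le> c" "I \<noteq> {}" "bdd_above (f ` I)"
  shows "(SUP i\<in>I. c * f i) = c * (SUP i\<in>I. f i)"
proof -
  have "c * Sup (f ` I) = (SUP y\<in>f ` I. c * y)"
    using assms by (intro continuous_at_Sup_mono) (auto intro: monoI mult_left_mono continuous_intros)
  then show ?thesis
    by (simp add: image_comp)
qed

lemma cmod_add_le_sqrt2: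
  assumes "(cmod z)\<^sup>2 + (cmod w)\<^sup>2 \<le> 1"
  shows "cmod (z + w) \<le> sqrt 2"
proof -
  have "(cmod z + cmod w)\<^sup>2 \<le> 2 * ((cmod z)\<^sup>2 + (cmod w)\<^sup>2)"
    using sum_squares_ge_zero[of "cmod z - cmod w" 0] by (simp add: power2_eq_square algebra_simps)
  also have "\<dots> \<le> 2"
    using assms by simp
  finally have "cmod z + cmod w \<le> sqrt 2"
    by (rule real_le_rsqrt)
  then show ?thesis
    using norm_triangle_ineq[of z w] by linarith
qed

lemma dragomir_selfadjoint:
  assumes R: "bounded_linear R" and "hadjoint R = R"
  shows "dragomir R = sqrt 2 * onorm R"
proof -
  let ?B = "{(\<zeta>, \<eta>). (cmod \<zeta>)\<^sup>2 + (cmod \<eta>)\<^sup>2 \<le> 1}"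
  let ?f = "\<lambda>p. onorm (\<lambda>x. scaleC (fst p + snd p) (R x))"
  have "dragomir R = (SUP p\<in>?B. ?f p)"
    unfolding dragomir_def \<open>hadjoint R = R\<close> by (simp add: scaleC_add_left)
  also have "\<dots> = sqrt 2 * onorm R"
  proof (rule antisym)
    have le: "?f p \<le> sqrt 2 * onorm R" if "p \<in> ?B" for p
    proof (rule onorm_bound)
      show "0 \<le> sqrt 2 * onorm R"
        by (simp add: onorm_pos_le[OF R])
      have "cmod (fst p + snd p) \<le> sqrt 2"
        using that by (auto intro: cmod_add_le_sqrt2)
      then show "norm (scaleC (fst p + snd p) (R x)) \<le> sqrt 2 * onorm R * norm x" for x
        using onorm[OF R, of x] onorm_pos_le[OF R]
        by (simp add: norm_scaleC mult.assoc mult_mono)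
    qed
    define h where "h = complex_of_real (sqrt 2 / 2)"
    have "(h, h) \<in> ?B"
      by (simp add: h_def power_divide)
    then show "(SUP p\<in>?B. ?f p) \<le> sqrt 2 * onorm R"
      using le by (intro cSUP_least) blast+
    have "h + h = complex_of_real (sqrt 2)"
      unfolding h_def by (metis field_sum_of_halves of_real_add)
    then have "(\<lambda>x. scaleC (h + h) (R x)) = (\<lambda>x. sqrt 2 *\<^sub>R R x)"
      by (simp add: scaleC_of_real)
    then have witness: "?f (h, h) = sqrt 2 * onorm R"
      by (simp add: onorm_scaleR[OF R])
    have "bdd_above (?f ` ?B)"
      by (rule bdd_aboveI2) (rule le)
    then show "sqrt 2 * onorm R \<le> (SUP p\<in>?B. ?f p)"
      unfolding witness[symmetric] by (rule cSUP_upper[OF \<open>(h, h) \<in> ?B\<close>])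
  qed
  finally show ?thesis .
qed

lemma onorm_ReOp_rotation_le_numrad:
  assumes "bounded_op T"
  shows "onorm (ReOp (\<lambda>x. scaleC (exp (\<i> * of_real \<theta>)) (T x))) \<le> numrad T"
  using onorm_ReOp_le_numrad[OF bounded_op_scaleC_left[OF assms, where c = "exp (\<i> * of_real \<theta>)"]]
  by (simp add: numrad_scaleC_unimodular norm_exp_i_times)

lemma SUP_onorm_ReOp_rotation:
  assumes T: "bounded_op T"
  shows "(SUP \<theta>. onorm (ReOp (\<lambda>x. scaleC (exp (\<i> * of_real \<theta>)) (T x)))) = numrad T"
    (is "(SUP \<theta>. ?g \<theta>) = _")
proof (rule antisym)
  show "(SUP \<theta>. ?g \<theta>) \<le> numrad T"
    by (rule cSUP_least[OF UNIV_not_empty onorm_ReOp_rotation_le_numrad[OF T]])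
  have bdd: "bdd_above (range ?g)"
    by (intro bdd_aboveI2[where M = "numrad T"] onorm_ReOp_rotation_le_numrad[OF T])
  have rot: "bounded_op (\<lambda>x. scaleC (exp (\<i> * of_real \<theta>)) (T x))" for \<theta>
    using bounded_op_scaleC_left[OF T, where c = "exp (\<i> * of_real \<theta>)"] .
  show "numrad T \<le> (SUP \<theta>. ?g \<theta>)"
  proof (rule numrad_least)
    have "0 \<le> ?g 0"
      by (rule onorm_pos_le[OF bounded_linear_ReOp[OF rot]])
    also have "\<dots> \<le> (SUP \<theta>. ?g \<theta>)"
      by (rule cSUP_upper[OF UNIV_I bdd])
    finally show "0 \<le> (SUP \<theta>. ?g \<theta>)" .
    fix x :: 'a
    assume "norm x = 1"
    define \<theta> where "\<theta> = - Arg (cinner (T x) x)"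
    have rotated: "exp (\<i> * of_real \<theta>) * cinner (T x) x = of_real (cmod (cinner (T x) x))"
      unfolding \<theta>_def by (rule exp_neg_Arg_mult)
    have "cmod (cinner (T x) x) = Re (cinner (scaleC (exp (\<i> * of_real \<theta>)) (T x)) x)"
      by (simp only: cinner_scaleC_left rotated Re_complex_of_real)
    also have "\<dots> \<le> ?g \<theta>"
      by (rule Re_cinner_le_onorm_ReOp[OF rot \<open>norm x = 1\<close>])
    also have "\<dots> \<le> (SUP \<theta>. ?g \<theta>)"
      by (rule cSUP_upper[OF UNIV_I bdd])
    finally show "cmod (cinner (T x) x) \<le> (SUP \<theta>. ?g \<theta>)" .
  qed
qed

theorem proposition3p1:
  fixes T :: "'a::complex_hilbert \<Rightarrow> 'a"
  assumes "bounded_op T"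
  shows "w_Omega T = sqrt 2 * numrad T"
proof -
  let ?R = "\<lambda>\<theta>. ReOp (\<lambda>x. scaleC (exp (\<i> * of_real \<theta>)) (T x))"
  have rot: "bounded_op (\<lambda>x. scaleC (exp (\<i> * of_real \<theta>)) (T x))" for \<theta>
    using bounded_op_scaleC_left[OF assms, where c = "exp (\<i> * of_real \<theta>)"] .
  have "w_Omega T = (SUP \<theta>. sqrt 2 * onorm (?R \<theta>))"
    unfolding w_Omega_def
    by (simp add: dragomir_selfadjoint bounded_linear_ReOp[OF rot] hadjoint_ReOp[OF rot])
  also have "\<dots> = sqrt 2 * (SUP \<theta>. onorm (?R \<theta>))"
    by (intro cSUP_mult_left bdd_aboveI2[where M = "numrad T"] onorm_ReOp_rotation_le_numrad[OF assms]) auto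
  also have "\<dots> = sqrt 2 * numrad T"
    by (simp add: SUP_onorm_ReOp_rotation[OF assms])
  finally show ?thesis .
qed

end
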